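(* Let $G\leq \mathrm{Aut}(X^* )$, $H\le G$ and $k\ge 0$. If $T:=\{v\in X^k : \psi_v(H)\text{ is finite}\}$ is non-empty, then for every $n\ge k$ the shadow $S(T,n)$ is setwise invariant under the action of $H$ on $X^n$.
   Context: $X^*$ is the free monoid on a finite set $X$, viewed as a rooted tree; $X^n$ is the set of words of length $n$; $\mathrm{Aut}(X^* )$ is the group of prefix-preserving bijections of $X^*$. For $g\in\mathrm{Aut}(X^* )$ and $u\in X^*$ the section $g_u$ is defined by $g(uw)=g(u)g_u(w)$ for all $w$, and $\psi_u(H)=\{h_u:h\in H\}$. For $T\subseteq X^k$ and $n\ge k$, the shadow of $T$ on level $n$ is $S(T,n)=\{v\in X^n: \exists t\in T,\ t \text{ is a prefix of } v\}$. *)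

theory Defs
  imports Main "HOL-Library.Sublist"
begin

text \<open>The alphabet X is the (finite) universe of the type 'a; X^* is 'a list.\<close>

definition Aut :: "('a::finite list \<Rightarrow> 'a list) set" where
  "Aut = {g. bij g \<and> (\<forall>u v. prefix u v \<longleftrightarrow> prefix (g u) (g v))}"

definition aut_subgroup :: "('a::finite list \<Rightarrow> 'a list) set \<Rightarrow> bool" where
  "aut_subgroup H \<longleftrightarrow> H \<subseteq> Aut \<and> id \<in> H \<and> (\<forall>g\<in>H. \<forall>h\<in>H. g \<circ> h \<in> H)
     \<and> (\<forall>h\<in>H. inv h \<in> H)"

text \<open>Section g_u: g(uw) = g(u) g_u(w).\<close>
definition section_at :: "('a list \<Rightarrow> 'a list) \<Rightarrow> 'a list \<Rightarrow> ('a list \<Rightarrow> 'a list)" where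
  "section_at g u = (\<lambda>w. drop (length u) (g (u @ w)))"

definition psi :: "'a list \<Rightarrow> ('a list \<Rightarrow> 'a list) set \<Rightarrow> ('a list \<Rightarrow> 'a list) set" where
  "psi u H = (\<lambda>h. section_at h u) ` H"

definition shadow :: "'a list set \<Rightarrow> nat \<Rightarrow> 'a list set" where
  "shadow T n = {v. length v = n \<and> (\<exists>t\<in>T. prefix t v)}"

end

theory Submission
  imports Defs
begin

text \<open>An automorphism g maps the prefixes of v bijectively onto the prefixes of g(v), so it
  preserves lengths and acts as g(uw) = g(u) g_u(w). Sections compose as (gh)_v = g_h(v) h_v, and
  h_v is onto, so precomposition with h_v embeds \<psi>_h(v)(H) into \<psi>_v(H). Hence every h in H maps
  T into T, and being prefix preserving it maps S(T,n) into S(T,n); applying this to the inverse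
  of h as well gives equality.\<close>

lemma Aut_prefix_iff: "g \<in> Aut \<Longrightarrow> prefix (g u) (g v) \<longleftrightarrow> prefix u v"
  unfolding Aut_def by blast

lemma Aut_bij: "g \<in> Aut \<Longrightarrow> bij g"
  unfolding Aut_def by blast

lemma Aut_prefixes_image:
  assumes g: "g \<in> Aut"
  shows "{u. prefix u (g v)} = g ` {u. prefix u v}"
proof
  show "g ` {u. prefix u v} \<subseteq> {u. prefix u (g v)}"
    using Aut_prefix_iff[OF g] by blast
  show "{u. prefix u (g v)} \<subseteq> g ` {u. prefix u v}"
  proof
    fix u assume "u \<in> {u. prefix u (g v)}"
    moreover obtain x where "u = g x"
      using Aut_bij[OF g] by (metis bij_pointE)
    ultimately show "u \<in> g ` {u. prefix u v}"
      using Aut_prefix_iff[OF g] by blast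
  qed
qed

lemma Aut_length: assumes g: "g \<in> Aut" shows "length (g v) = length v"
proof -
  have "card {u. prefix u (g v)} = card {u. prefix u v}"
    unfolding Aut_prefixes_image[OF g]
    by (rule card_image) (use Aut_bij[OF g] bij_is_inj inj_on_subset in blast)
  then show ?thesis
    using card_set_prefixes[of v] card_set_prefixes[of "g v"] by (simp add: set_prefixes_eq)
qed

lemma Aut_append: assumes g: "g \<in> Aut" shows "g (v @ w) = g v @ section_at g v w"
proof -
  have "prefix (g v) (g (v @ w))"
    using Aut_prefix_iff[OF g, of v "v @ w"] by simp
  then obtain r where r: "g (v @ w) = g v @ r"
    by (auto simp: prefix_def)
  show ?thesis
    unfolding section_at_def r using Aut_length[OF g, of v] by simp
qed

lemma surj_section_at: assumes g: "g \<in> Aut" shows "surj (section_at g v)"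
proof -
  have "w' \<in> range (section_at g v)" for w'
  proof -
    obtain x where x: "g x = g v @ w'"
      using Aut_bij[OF g] by (metis bij_pointE)
    then have "prefix v x"
      using Aut_prefix_iff[OF g] by (metis prefixI)
    then obtain w where "x = v @ w"
      by (auto simp: prefix_def)
    then have "section_at g v w = w'"
      using x Aut_append[OF g, of v w] by simp
    then show ?thesis by blast
  qed
  then show ?thesis by blast
qed

lemma section_at_comp:
  assumes g: "g \<in> Aut" and h: "h \<in> Aut"
  shows "section_at (g \<circ> h) v = section_at g (h v) \<circ> section_at h v"
proof
  fix w
  have "(g \<circ> h) (v @ w) = g (h v) @ section_at g (h v) (section_at h v w)"
    using Aut_append[OF h] Aut_append[OF g] by simp
  then show "section_at (g \<circ> h) v w = (section_at g (h v) \<circ> section_at h v) w"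
    by (simp add: section_at_def Aut_length[OF g] Aut_length[OF h])
qed

lemma finite_psi_image:
  assumes H: "H \<subseteq> Aut" and comp_closed: "\<forall>g\<in>H. \<forall>h\<in>H. g \<circ> h \<in> H"
    and h: "h \<in> H" and fin: "finite (psi v H)"
  shows "finite (psi (h v) H)"
proof -
  let ?precomp = "\<lambda>f. f \<circ> section_at h v"
  have "surj (section_at h v)"
    using surj_section_at H h by blast
  then have "inj_on ?precomp (psi (h v) H)"
    by (intro inj_onI ext) (metis comp_apply surjD)
  moreover have "?precomp ` psi (h v) H \<subseteq> psi v H"
  proof
    fix F assume "F \<in> ?precomp ` psi (h v) H"
    then obtain g where g: "g \<in> H" and "F = section_at g (h v) \<circ> section_at h v"
      unfolding psi_def by auto
    moreover have "g \<in> Aut" "h \<in> Aut"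
      using H g h by auto
    ultimately have "F = section_at (g \<circ> h) v"
      by (simp add: section_at_comp)
    then show "F \<in> psi v H"
      using comp_closed g h unfolding psi_def by blast
  qed
  ultimately show ?thesis
    using fin finite_subset finite_imageD by blast
qed

lemma shadow_image_subset:
  assumes h: "h \<in> Aut" and "h ` T \<subseteq> T"
  shows "h ` shadow T n \<subseteq> shadow T n"
proof
  fix y assume "y \<in> h ` shadow T n"
  then obtain x t where y: "y = h x" and x: "length x = n" and t: "t \<in> T" "prefix t x"
    unfolding shadow_def by auto
  have "h t \<in> T"
    using t(1) assms(2) by blast
  moreover have "prefix (h t) y"
    using t(2) y Aut_prefix_iff[OF h] by simp
  ultimately show "y \<in> shadow T n"
    using x y Aut_length[OF h, of x] unfolding shadow_def by blast
qed

theorem lemma4p2: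
  fixes G H :: "('a::finite list \<Rightarrow> 'a list) set" and k n :: nat and T :: "'a list set"
  assumes "aut_subgroup G" and "aut_subgroup H" and "H \<subseteq> G"
    and "T = {v. length v = k \<and> finite (psi v H)}"
    and "T \<noteq> {}" and "n \<ge> k"
  shows "\<forall>h\<in>H. h ` shadow T n = shadow T n"
proof
  fix h assume h: "h \<in> H"
  have H_Aut: "H \<subseteq> Aut" and comp_closed: "\<forall>g\<in>H. \<forall>h\<in>H. g \<circ> h \<in> H"
    and inv_h: "inv h \<in> H"
    using assms(2) h unfolding aut_subgroup_def by auto
  have shadow_stable: "f ` shadow T n \<subseteq> shadow T n" if f: "f \<in> H" for f
  proof (rule shadow_image_subset)
    show "f \<in> Aut" using f H_Aut by blast
    then show "f ` T \<subseteq> T"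
      unfolding assms(4) using finite_psi_image[OF H_Aut comp_closed f] Aut_length by auto
  qed
  have "shadow T n = h ` inv h ` shadow T n"
    using Aut_bij h H_Aut by (metis bij_is_surj image_f_inv_f subsetD)
  also have "\<dots> \<subseteq> h ` shadow T n"
    using shadow_stable[OF inv_h] by blast
  finally show "h ` shadow T n = shadow T n"
    using shadow_stable[OF h] by blast
qed

end
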